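(* Let $(\Omega,\mathcal F)$ be a measurable space with $\Sigma\neq\emptyset$, $\nu$ a finite measure, and $\mu$ a finite measure with $\mu\ll\nu$. Let $F_\mu(y)=\nu(\{\omega:\frac{d\mu}{d\nu}(\omega)\le y\})$, $F_\mu(+\infty)=\lim_{y\to\infty}F_\mu(y)$, $F_\mu^{-1}(\beta)=\inf\{z\ge0:F_\mu(z)>\beta\}$, and let $m$ be the (probability) measure on $(0,1]$ determined by $$m((0,\gamma])=\frac1{\mu(\Omega)}\int_{\{y\ge0:\ F_\mu(y)\ge(1-\gamma)\nu(\Omega)\}}(F_\mu(+\infty)-F_\mu(y))\,dy,\quad\gamma\in(0,1].$$ Then for all $\gamma\in[0,1)$, $$\int_{[1-\gamma,1]}\frac{m(d\alpha)}{\alpha}=\frac{\nu(\Omega)}{\mu(\Omega)}F_\mu^{-1}(\nu(\Omega)\gamma).$$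
   Context: $\Sigma$ denotes the set of all classes $\mathcal I\subset\mathcal F$ that are chains (totally ordered by inclusion), contain $\emptyset$ and $\Omega$, and generate $\mathcal F$ as a $\sigma$-algebra. $\frac{d\mu}{d\nu}$ is the non-negative Radon–Nikodym derivative. *)

theory Defs
  imports "HOL-Probability.Probability"
begin

definition Sigma_chains :: "'a measure \<Rightarrow> 'a set set set" where
  "Sigma_chains M = {I. I \<subseteq> sets M \<and> (\<forall>A\<in>I. \<forall>B\<in>I. A \<subseteq> B \<or> B \<subseteq> A)
      \<and> {} \<in> I \<and> space M \<in> I \<and> sigma_sets (space M) I = sets M}"

text \<open>F_mu(y) = nu({omega : dmu/dnu(omega) <= y}); for y < 0 this set is empty since
  the density is nonnegative.\<close>
definition Fmu :: "'a measure \<Rightarrow> 'a measure \<Rightarrow> real \<Rightarrow> real" where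
  "Fmu \<nu> \<mu> y = (if y < 0 then 0
      else measure \<nu> {\<omega> \<in> space \<nu>. RN_deriv \<nu> \<mu> \<omega> \<le> ennreal y})"

definition Fmu_inf :: "'a measure \<Rightarrow> 'a measure \<Rightarrow> real" where
  "Fmu_inf \<nu> \<mu> = Lim at_top (Fmu \<nu> \<mu>)"

definition Fmu_inv :: "'a measure \<Rightarrow> 'a measure \<Rightarrow> real \<Rightarrow> real" where
  "Fmu_inv \<nu> \<mu> \<beta> = Inf {z. z \<ge> 0 \<and> Fmu \<nu> \<mu> z > \<beta>}"

end

theory Submission
  imports Defs
begin

text \<open>Write \<open>f = d\<mu>/d\<nu>\<close>, \<open>N = \<nu>(\<Omega>)\<close> and \<open>M = \<mu>(\<Omega>)\<close>. Since \<open>\<integral> f d\<nu> = M\<close>, Markov's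
  inequality gives \<open>F\<^sub>\<mu>(y) \<ge> N - M/y\<close>, so \<open>F\<^sub>\<mu>(+\<infinity>) = N\<close>. The defining identity of \<open>m\<close> then
  says that \<open>m\<close> and the image of the measure with density \<open>(N - F\<^sub>\<mu>(y))/M\<close> on \<open>y \<ge> 0\<close> under
  \<open>y \<mapsto> 1 - F\<^sub>\<mu>(y)/N = \<nu>(f > y)/N\<close> have the same distribution function, hence coincide.
  Pulled back along this map, \<open>1/\<alpha>\<close> cancels the density down to the constant \<open>N/M\<close>, so the
  integral is \<open>N/M\<close> times the length of \<open>{y \<ge> 0. F\<^sub>\<mu>(y) \<le> N\<gamma>}\<close>, an interval of length
  \<open>F\<^sub>\<mu>\<^sup>-\<^sup>1(N\<gamma>)\<close> because \<open>F\<^sub>\<mu>\<close> is monotone.\<close>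

lemma finite_measure_Markov_inequality:
  assumes "finite_measure M" and [measurable]: "f \<in> borel_measurable M"
    and "(\<integral>\<^sup>+ x. f x \<partial>M) \<le> ennreal c" and "0 \<le> c" and "0 < y"
  shows "y * measure M {x \<in> space M. ennreal y < f x} \<le> c"
proof -
  interpret finite_measure M by fact
  let ?A = "{x \<in> space M. ennreal y < f x}"
  have "ennreal y * emeasure M ?A = (\<integral>\<^sup>+ x. ennreal y * indicator ?A x \<partial>M)"
    by (simp add: nn_integral_cmult_indicator)
  also have "\<dots> \<le> (\<integral>\<^sup>+ x. f x \<partial>M)"
    by (intro nn_integral_mono) (auto simp: indicator_def less_imp_le)
  finally have "ennreal (y * measure M ?A) \<le> ennreal c"
    using assms(3,5) by (simp add: emeasure_eq_measure ennreal_mult)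
  then show ?thesis using \<open>0 \<le> c\<close> by simp
qed

lemma emeasure_lborel_sublevel_mono_eq_Inf:
  fixes F :: "real \<Rightarrow> real"
  assumes "mono F" and "0 \<le> z" and "c < F z"
  shows "emeasure lborel {y. 0 \<le> y \<and> F y \<le> c} = ennreal (Inf {z. 0 \<le> z \<and> c < F z})"
proof -
  define Z where "Z = {z. 0 \<le> z \<and> c < F z}"
  define s where "s = Inf Z"
  have [measurable]: "F \<in> borel_measurable borel" using borel_measurable_mono[OF \<open>mono F\<close>] .
  have "Z \<noteq> {}" "bdd_below Z" using assms(2,3) by (auto simp: Z_def intro: bdd_belowI[of _ 0])
  have "0 \<le> s" unfolding s_def using \<open>Z \<noteq> {}\<close> by (auto intro!: cInf_greatest simp: Z_def)
  have "{0..<s} \<subseteq> {y. 0 \<le> y \<and> F y \<le> c}"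
  proof
    fix y assume "y \<in> {0..<s}"
    then have "y \<notin> Z" using cInf_lower[OF _ \<open>bdd_below Z\<close>, of y] unfolding s_def by force
    then show "y \<in> {y. 0 \<le> y \<and> F y \<le> c}" using \<open>y \<in> {0..<s}\<close> unfolding Z_def by auto
  qed
  moreover have "{y. 0 \<le> y \<and> F y \<le> c} \<subseteq> {0..s}"
  proof safe
    fix y assume "0 \<le> y" "F y \<le> c"
    have "y \<le> s"
    proof (rule ccontr)
      assume "\<not> y \<le> s"
      then obtain z where "z \<in> Z" "z < y"
        using cInf_less_iff[OF \<open>Z \<noteq> {}\<close> \<open>bdd_below Z\<close>] unfolding s_def by (auto simp: not_le)
      then show False using \<open>F y \<le> c\<close> monoD[OF \<open>mono F\<close>, of z y] unfolding Z_def by auto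
    qed
    then show "y \<in> {0..s}" using \<open>0 \<le> y\<close> by simp
  qed
  ultimately have "emeasure lborel {0..<s} \<le> emeasure lborel {y. 0 \<le> y \<and> F y \<le> c}"
    "emeasure lborel {y. 0 \<le> y \<and> F y \<le> c} \<le> emeasure lborel {0..s}"
    by (auto intro!: emeasure_mono)
  then show ?thesis using \<open>0 \<le> s\<close> unfolding s_def Z_def by (auto intro: antisym)
qed

lemma nn_integral_eq_pushforward_of_Ioc:
  fixes m :: "real measure" and \<rho> :: "'b measure" and T :: "'b \<Rightarrow> real"
  assumes sets_m: "sets m = sets (restrict_space borel {0<..1})" and "finite_measure m"
    and [measurable]: "T \<in> \<rho> \<rightarrow>\<^sub>M borel"
    and T_le_1: "\<And>y. y \<in> space \<rho> \<Longrightarrow> T y \<le> 1"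
    and T_nonpos_null: "emeasure \<rho> {y \<in> space \<rho>. T y \<le> 0} = 0"
    and Ioc: "\<And>x. 0 < x \<Longrightarrow> x \<le> 1 \<Longrightarrow> emeasure m {0<..x} = emeasure \<rho> {y \<in> space \<rho>. T y \<le> x}"
    and [measurable]: "h \<in> borel_measurable borel"
  shows "(\<integral>\<^sup>+ \<alpha>. h \<alpha> \<partial>m) = (\<integral>\<^sup>+ y. h (T y) \<partial>\<rho>)"
proof -
  have [measurable]: "id \<in> m \<rightarrow>\<^sub>M borel"
    by (subst measurable_cong_sets[OF sets_m refl]) (rule measurable_restrict_space1, simp)
  have space_m: "space m = {0<..1}"
    using sets_eq_imp_space_eq[OF sets_m] by simp
  have T_le_iff: "{y \<in> space \<rho>. T y \<le> x} = space \<rho>" if "1 \<le> x" for x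
    using T_le_1 that by fastforce
  have cdf_eq: "emeasure (distr m borel id) {..x} = emeasure (distr \<rho> borel T) {..x}" for x
  proof -
    have m_eq: "emeasure (distr m borel id) {..x} = emeasure m ({..x} \<inter> {0<..1})"
      using space_m by (simp add: emeasure_distr)
    have \<rho>_eq: "emeasure (distr \<rho> borel T) {..x} = emeasure \<rho> {y \<in> space \<rho>. T y \<le> x}"
      by (simp add: emeasure_distr vimage_def Int_def conj_commute)
    consider "x \<le> 0" | "0 < x" "x \<le> 1" | "1 < x" by linarith
    then show ?thesis
    proof cases
      case 1
      then have "{..x} \<inter> {0<..1} = {}" by auto
      moreover have "emeasure \<rho> {y \<in> space \<rho>. T y \<le> x} \<le> emeasure \<rho> {y \<in> space \<rho>. T y \<le> 0}"
        using 1 by (intro emeasure_mono) auto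
      ultimately show ?thesis using T_nonpos_null by (simp add: m_eq \<rho>_eq)
    next
      case 2
      then have "{..x} \<inter> {0<..1} = {0<..x}" by auto
      then show ?thesis using 2 Ioc by (simp add: m_eq \<rho>_eq)
    next
      case 3
      then have "{..x} \<inter> {0<..1} = {0<..1}" by auto
      then show ?thesis using 3 Ioc[of 1] by (simp add: m_eq \<rho>_eq T_le_iff)
    qed
  qed
  have "finite_measure (distr m borel id)"
    by (rule finite_measure.finite_measure_distr) (use \<open>finite_measure m\<close> in auto)
  moreover have "finite_measure (distr \<rho> borel T)"
  proof (rule finite_measureI)
    have "emeasure (distr \<rho> borel T) (space (distr \<rho> borel T)) = emeasure m {0<..1}"
      using Ioc[of 1] by (simp add: emeasure_distr T_le_iff)
    then show "emeasure (distr \<rho> borel T) (space (distr \<rho> borel T)) \<noteq> \<infinity>"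
      using \<open>finite_measure m\<close> by (simp add: finite_measure.emeasure_finite)
  qed
  ultimately have "distr m borel id = distr \<rho> borel T"
    by (intro cdf_unique') (auto simp: finite_borel_measure_def finite_borel_measure_axioms_def
        cdf_def measure_def cdf_eq)
  then show ?thesis
    using nn_integral_distr[of id m borel h] nn_integral_distr[of T \<rho> borel h] by simp
qed

lemma Fmu_nonneg: "0 \<le> Fmu \<nu> \<mu> y"
  by (simp add: Fmu_def)

lemma (in finite_measure) Fmu_le_measure_space: "Fmu M \<mu> y \<le> measure M (space M)"
  by (simp add: Fmu_def bounded_measure)

lemma (in finite_measure) mono_Fmu: "mono (Fmu M \<mu>)"
proof (rule monoI)
  fix x y :: real assume "x \<le> y"
  then have "measure M {\<omega> \<in> space M. RN_deriv M \<mu> \<omega> \<le> ennreal x}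
      \<le> measure M {\<omega> \<in> space M. RN_deriv M \<mu> \<omega> \<le> ennreal y}"
    by (intro finite_measure_mono) (auto intro: order_trans ennreal_leI)
  then show "Fmu M \<mu> x \<le> Fmu M \<mu> y"
    using \<open>x \<le> y\<close> by (simp add: Fmu_def)
qed

lemma (in finite_measure) measurable_Fmu [measurable]: "Fmu M \<mu> \<in> borel_measurable borel"
  using borel_measurable_mono[OF mono_Fmu] .

lemma (in finite_measure) Fmu_eq_measure_space_diff:
  assumes "0 \<le> y"
  shows "Fmu M \<mu> y = measure M (space M) - measure M {\<omega> \<in> space M. ennreal y < RN_deriv M \<mu> \<omega>}"
proof -
  have "{\<omega> \<in> space M. RN_deriv M \<mu> \<omega> \<le> ennreal y}
      = space M - {\<omega> \<in> space M. ennreal y < RN_deriv M \<mu> \<omega>}"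
    by (auto simp: not_less)
  then show ?thesis
    using assms by (simp add: Fmu_def finite_measure_Diff)
qed

locale finite_abs_cont_measures = nu: finite_measure \<nu> + mu: finite_measure \<mu>
  for \<nu> \<mu> :: "'a measure" +
  assumes sets_eq: "sets \<mu> = sets \<nu>" and abs_cont: "absolutely_continuous \<nu> \<mu>"
begin

lemma nn_integral_RN_deriv: "(\<integral>\<^sup>+ \<omega>. RN_deriv \<nu> \<mu> \<omega> \<partial>\<nu>) = ennreal (measure \<mu> (space \<mu>))"
  using nu.RN_deriv_nn_integral[OF abs_cont sets_eq, of "\<lambda>_. 1"]
  by (simp add: mu.emeasure_eq_measure)

lemma measure_space_pos:
  assumes "0 < measure \<mu> (space \<mu>)"
  shows "0 < measure \<nu> (space \<nu>)"
proof (rule ccontr)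
  assume "\<not> 0 < measure \<nu> (space \<nu>)"
  then have "space \<nu> \<in> null_sets \<nu>"
    using measure_nonneg[of \<nu> "space \<nu>"] by (simp add: nu.emeasure_eq_measure null_sets_def)
  then have "space \<mu> \<in> null_sets \<mu>"
    using abs_cont sets_eq_imp_space_eq[OF sets_eq] by (auto simp: absolutely_continuous_def)
  then show False
    using assms by (simp add: mu.emeasure_eq_measure null_sets_def)
qed

lemma Fmu_lower_bound:
  assumes "0 < y"
  shows "measure \<nu> (space \<nu>) - measure \<mu> (space \<mu>) / y \<le> Fmu \<nu> \<mu> y"
proof -
  have "y * measure \<nu> {\<omega> \<in> space \<nu>. ennreal y < RN_deriv \<nu> \<mu> \<omega>} \<le> measure \<mu> (space \<mu>)"
    using assms nn_integral_RN_deriv nu.finite_measure_axioms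
    by (intro finite_measure_Markov_inequality) auto
  then have "measure \<nu> {\<omega> \<in> space \<nu>. ennreal y < RN_deriv \<nu> \<mu> \<omega>} \<le> measure \<mu> (space \<mu>) / y"
    using assms by (simp add: field_simps mult.commute)
  then show ?thesis
    using assms nu.Fmu_eq_measure_space_diff[of y \<mu>] by simp
qed

lemma tendsto_Fmu: "(Fmu \<nu> \<mu> \<longlongrightarrow> measure \<nu> (space \<nu>)) at_top"
proof (rule tendsto_sandwich)
  show "\<forall>\<^sub>F y in at_top. measure \<nu> (space \<nu>) - measure \<mu> (space \<mu>) / y \<le> Fmu \<nu> \<mu> y"
    using eventually_gt_at_top[of 0] by eventually_elim (rule Fmu_lower_bound)
  show "\<forall>\<^sub>F y in at_top. Fmu \<nu> \<mu> y \<le> measure \<nu> (space \<nu>)"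
    by (simp add: nu.Fmu_le_measure_space)
  show "((\<lambda>y. measure \<nu> (space \<nu>) - measure \<mu> (space \<mu>) / y) \<longlongrightarrow> measure \<nu> (space \<nu>)) at_top"
    using tendsto_diff[OF tendsto_const real_tendsto_divide_at_top[OF tendsto_const filterlim_ident]]
    by simp
qed simp

lemma Fmu_inf_eq: "Fmu_inf \<nu> \<mu> = measure \<nu> (space \<nu>)"
  unfolding Fmu_inf_def using tendsto_Fmu by (rule tendsto_Lim[rotated]) simp

lemma ex_Fmu_gt:
  assumes "c < measure \<nu> (space \<nu>)"
  shows "\<exists>z\<ge>0. c < Fmu \<nu> \<mu> z"
proof -
  have "\<forall>\<^sub>F z in at_top. 0 \<le> z \<and> c < Fmu \<nu> \<mu> z"
    using eventually_ge_at_top[of 0] order_tendstoD(1)[OF tendsto_Fmu assms]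
    by eventually_elim auto
  then show ?thesis
    using eventually_happens'[OF trivial_limit_at_top_linorder] by blast
qed

end

definition tail_fraction :: "'a measure \<Rightarrow> 'a measure \<Rightarrow> real \<Rightarrow> real" where
  "tail_fraction \<nu> \<mu> y = 1 - Fmu \<nu> \<mu> y / measure \<nu> (space \<nu>)"

definition tail_weight :: "'a measure \<Rightarrow> 'a measure \<Rightarrow> real \<Rightarrow> ennreal" where
  "tail_weight \<nu> \<mu> y =
    ennreal ((measure \<nu> (space \<nu>) - Fmu \<nu> \<mu> y) / measure \<mu> (space \<mu>)) * indicator {0..} y"

lemma tail_fraction_le_1: "tail_fraction \<nu> \<mu> y \<le> 1"
  by (simp add: tail_fraction_def Fmu_nonneg)

lemma tail_fraction_le_iff:
  assumes "0 < measure \<nu> (space \<nu>)"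
  shows "tail_fraction \<nu> \<mu> y \<le> x \<longleftrightarrow> (1 - x) * measure \<nu> (space \<nu>) \<le> Fmu \<nu> \<mu> y"
  using assms by (simp add: tail_fraction_def field_simps)

context finite_measure
begin

lemma measurable_tail_fraction [measurable]: "tail_fraction M \<mu> \<in> borel_measurable borel"
  unfolding tail_fraction_def by measurable

lemma measurable_tail_weight [measurable]: "tail_weight M \<mu> \<in> borel_measurable borel"
  unfolding tail_weight_def by measurable

end

context finite_abs_cont_measures
begin

lemma emeasure_tail_weight_sublevel:
  assumes "0 < measure \<mu> (space \<mu>)"
  shows "emeasure (density lborel (tail_weight \<nu> \<mu>)) {y. tail_fraction \<nu> \<mu> y \<le> x} =
    ennreal (1 / measure \<mu> (space \<mu>)) *
    (\<integral>\<^sup>+ y \<in> {y. y \<ge> 0 \<and> Fmu \<nu> \<mu> y \<ge> (1 - x) * measure \<nu> (space \<nu>)}.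
       ennreal (Fmu_inf \<nu> \<mu> - Fmu \<nu> \<mu> y) \<partial>lborel)"
proof -
  have "0 < measure \<nu> (space \<nu>)" using measure_space_pos[OF assms] .
  have "emeasure (density lborel (tail_weight \<nu> \<mu>)) {y. tail_fraction \<nu> \<mu> y \<le> x} =
      (\<integral>\<^sup>+ y. tail_weight \<nu> \<mu> y * indicator {y. tail_fraction \<nu> \<mu> y \<le> x} y \<partial>lborel)"
    by (rule emeasure_density) measurable
  also have "\<dots> = (\<integral>\<^sup>+ y. ennreal (1 / measure \<mu> (space \<mu>)) *
      (ennreal (Fmu_inf \<nu> \<mu> - Fmu \<nu> \<mu> y) *
       indicator {y. y \<ge> 0 \<and> Fmu \<nu> \<mu> y \<ge> (1 - x) * measure \<nu> (space \<nu>)} y) \<partial>lborel)"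
    using assms \<open>0 < measure \<nu> (space \<nu>)\<close> nu.Fmu_le_measure_space
    by (intro nn_integral_cong)
      (auto simp: tail_weight_def tail_fraction_le_iff Fmu_inf_eq indicator_def
        simp flip: ennreal_mult)
  also have "\<dots> = ennreal (1 / measure \<mu> (space \<mu>)) *
      (\<integral>\<^sup>+ y \<in> {y. y \<ge> 0 \<and> Fmu \<nu> \<mu> y \<ge> (1 - x) * measure \<nu> (space \<nu>)}.
         ennreal (Fmu_inf \<nu> \<mu> - Fmu \<nu> \<mu> y) \<partial>lborel)"
    by (rule nn_integral_cmult) measurable
  finally show ?thesis .
qed

lemma emeasure_tail_fraction_nonpos:
  assumes "0 < measure \<mu> (space \<mu>)"
  shows "emeasure (density lborel (tail_weight \<nu> \<mu>)) {y. tail_fraction \<nu> \<mu> y \<le> 0} = 0"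
proof -
  have "0 < measure \<nu> (space \<nu>)" using measure_space_pos[OF assms] .
  then have integrand_0: "tail_weight \<nu> \<mu> y * indicator {y. tail_fraction \<nu> \<mu> y \<le> 0} y = 0" for y
    using nu.Fmu_le_measure_space[of \<mu> y]
    by (auto simp: tail_weight_def tail_fraction_le_iff indicator_def ennreal_neg)
  have "emeasure (density lborel (tail_weight \<nu> \<mu>)) {y. tail_fraction \<nu> \<mu> y \<le> 0} =
      (\<integral>\<^sup>+ y. tail_weight \<nu> \<mu> y * indicator {y. tail_fraction \<nu> \<mu> y \<le> 0} y \<partial>lborel)"
    by (rule emeasure_density) measurable
  also have "\<dots> = 0"
    by (simp only: integrand_0) simp
  finally show ?thesis .
qed

lemma nn_integral_eq_tail_weight_pushforward:
  fixes m :: "real measure"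
  assumes "sets m = sets (restrict_space borel {0<..1})" and "finite_measure m"
    and "0 < measure \<mu> (space \<mu>)"
    and "\<And>x. x \<in> {0<..1} \<Longrightarrow> emeasure m {0<..x} =
           ennreal (1 / measure \<mu> (space \<mu>)) *
           (\<integral>\<^sup>+ y \<in> {y. y \<ge> 0 \<and> Fmu \<nu> \<mu> y \<ge> (1 - x) * measure \<nu> (space \<nu>)}.
              ennreal (Fmu_inf \<nu> \<mu> - Fmu \<nu> \<mu> y) \<partial>lborel)"
    and [measurable]: "h \<in> borel_measurable borel"
  shows "(\<integral>\<^sup>+ \<alpha>. h \<alpha> \<partial>m) = (\<integral>\<^sup>+ y. tail_weight \<nu> \<mu> y * h (tail_fraction \<nu> \<mu> y) \<partial>lborel)"
proof -
  have "(\<integral>\<^sup>+ \<alpha>. h \<alpha> \<partial>m) = (\<integral>\<^sup>+ y. h (tail_fraction \<nu> \<mu> y) \<partial>density lborel (tail_weight \<nu> \<mu>))"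
    using assms(1-4)
    by (intro nn_integral_eq_pushforward_of_Ioc)
      (simp_all add: tail_fraction_le_1 emeasure_tail_weight_sublevel[symmetric]
        emeasure_tail_fraction_nonpos)
  then show ?thesis
    by (simp add: nn_integral_density)
qed

lemma tail_weight_div_tail_fraction:
  assumes "0 < measure \<mu> (space \<mu>)" and "\<gamma> < 1"
  shows "tail_weight \<nu> \<mu> y *
      (ennreal (1 / tail_fraction \<nu> \<mu> y) * indicator {1 - \<gamma>..1} (tail_fraction \<nu> \<mu> y)) =
    ennreal (measure \<nu> (space \<nu>) / measure \<mu> (space \<mu>)) *
      indicator {y. 0 \<le> y \<and> Fmu \<nu> \<mu> y \<le> measure \<nu> (space \<nu>) * \<gamma>} y"
proof -
  define N where "N = measure \<nu> (space \<nu>)"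
  define Mu where "Mu = measure \<mu> (space \<mu>)"
  have "0 < N" "0 < Mu" using measure_space_pos[OF assms(1)] assms(1) by (simp_all add: N_def Mu_def)
  consider "0 \<le> y" "Fmu \<nu> \<mu> y \<le> N * \<gamma>" | "0 \<le> y" "N * \<gamma> < Fmu \<nu> \<mu> y" | "y < 0" by linarith
  then show ?thesis
  proof cases
    case 1
    have "N * \<gamma> < N" using \<open>0 < N\<close> assms(2) by simp
    then have "Fmu \<nu> \<mu> y < N" using 1 by linarith
    moreover have "1 - \<gamma> \<le> tail_fraction \<nu> \<mu> y"
      using 1 \<open>0 < N\<close> by (simp add: tail_fraction_def N_def field_simps)
    moreover have "(N - Fmu \<nu> \<mu> y) / Mu * (1 / tail_fraction \<nu> \<mu> y) = N / Mu"
      using \<open>Fmu \<nu> \<mu> y < N\<close> \<open>0 < N\<close> \<open>0 < Mu\<close> by (simp add: tail_fraction_def N_def field_simps)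
    ultimately show ?thesis
      using 1 \<open>0 < N\<close> \<open>0 < Mu\<close> tail_fraction_le_1[of \<nu> \<mu> y]
      by (simp add: tail_weight_def N_def Mu_def ennreal_mult'[symmetric])
  next
    case 2
    then have "tail_fraction \<nu> \<mu> y < 1 - \<gamma>"
      using \<open>0 < N\<close> by (simp add: tail_fraction_def N_def field_simps)
    then show ?thesis using 2 by (simp add: N_def)
  next
    case 3
    then show ?thesis by (simp add: tail_weight_def)
  qed
qed

end

theorem lemma18:
  fixes \<nu> \<mu> :: "'a measure" and m :: "real measure"
  assumes "Sigma_chains \<nu> \<noteq> {}"
    and "finite_measure \<nu>" and "finite_measure \<mu>"
    and "sets \<mu> = sets \<nu>"
    and "absolutely_continuous \<nu> \<mu>"
    and "sets m = sets (restrict_space borel {0<..1})"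
    and "prob_space m"
    and "\<And>\<gamma>. \<gamma> \<in> {0<..1} \<Longrightarrow> emeasure m {0<..\<gamma>} =
           ennreal (1 / measure \<mu> (space \<mu>)) *
           (\<integral>\<^sup>+ y \<in> {y. y \<ge> 0 \<and> Fmu \<nu> \<mu> y \<ge> (1 - \<gamma>) * measure \<nu> (space \<nu>)}.
              ennreal (Fmu_inf \<nu> \<mu> - Fmu \<nu> \<mu> y) \<partial>lborel)"
    and "0 \<le> \<gamma>" "\<gamma> < 1"
  shows "(\<integral>\<^sup>+ \<alpha> \<in> {1 - \<gamma>..1}. ennreal (1 / \<alpha>) \<partial>m) =
         ennreal (measure \<nu> (space \<nu>) / measure \<mu> (space \<mu>) *
                  Fmu_inv \<nu> \<mu> (measure \<nu> (space \<nu>) * \<gamma>))"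
proof -
  interpret finite_abs_cont_measures \<nu> \<mu>
    using assms(2-5) by (simp add: finite_abs_cont_measures_def finite_abs_cont_measures_axioms_def)
  interpret m: prob_space m by fact
  have "0 < measure \<mu> (space \<mu>)"
  proof (rule ccontr)
    assume "\<not> 0 < measure \<mu> (space \<mu>)"
    then have "emeasure m {0<..1} = 0" using assms(8)[of 1] measure_nonneg[of \<mu> "space \<mu>"] by simp
    then show False using m.emeasure_space_1 sets_eq_imp_space_eq[OF assms(6)] by simp
  qed
  have "(\<integral>\<^sup>+ \<alpha> \<in> {1 - \<gamma>..1}. ennreal (1 / \<alpha>) \<partial>m) =
      (\<integral>\<^sup>+ y. tail_weight \<nu> \<mu> y *
        (ennreal (1 / tail_fraction \<nu> \<mu> y) * indicator {1 - \<gamma>..1} (tail_fraction \<nu> \<mu> y)) \<partial>lborel)"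
    using assms(6,8) m.finite_measure_axioms \<open>0 < measure \<mu> (space \<mu>)\<close>
    by (intro nn_integral_eq_tail_weight_pushforward) auto
  also have "\<dots> = (\<integral>\<^sup>+ y. ennreal (measure \<nu> (space \<nu>) / measure \<mu> (space \<mu>)) *
      indicator {y. 0 \<le> y \<and> Fmu \<nu> \<mu> y \<le> measure \<nu> (space \<nu>) * \<gamma>} y \<partial>lborel)"
    using \<open>0 < measure \<mu> (space \<mu>)\<close> \<open>\<gamma> < 1\<close> by (simp only: tail_weight_div_tail_fraction)
  also have "\<dots> = ennreal (measure \<nu> (space \<nu>) / measure \<mu> (space \<mu>)) *
      ennreal (Fmu_inv \<nu> \<mu> (measure \<nu> (space \<nu>) * \<gamma>))"
    using measure_space_pos[OF \<open>0 < measure \<mu> (space \<mu>)\<close>] \<open>\<gamma> < 1\<close>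
      emeasure_lborel_sublevel_mono_eq_Inf[OF nu.mono_Fmu] ex_Fmu_gt[of "measure \<nu> (space \<nu>) * \<gamma>"]
    by (subst nn_integral_cmult_indicator) (auto simp: Fmu_inv_def)
  also have "\<dots> = ennreal (measure \<nu> (space \<nu>) / measure \<mu> (space \<mu>) *
      Fmu_inv \<nu> \<mu> (measure \<nu> (space \<nu>) * \<gamma>))"
    by (rule ennreal_mult'[symmetric]) simp
  finally show ?thesis .
qed

end
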